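(* Let $G$ be a circle of circumference $1$, let $\mathbf{x}\in G^n$ be such that the agents are on one semicircle, and let $i\in N$, $x_i'\in G$ be such that the agents in $\mathbf{x}'=(x_i',\mathbf{x}_{-i})$ are not on one semicircle. Then $\mathrm{cost}(\mathrm{lrm}(\mathbf{x}),x_i)\le\mathrm{cost}(\mathrm{rc}(\mathbf{x}'),x_i)$.
   Context: $d(x,y)$ is the shorter-arc length; $\hat x$ the antipode of $x$; $\mathrm{cost}(P,x_i)=\mathbb{E}_{y\sim P}[d(x_i,y)]$. Agents are on one semicircle if all locations lie in some closed arc of length $1/2$. LRM: for a profile on one semicircle, fix a closed arc of minimal length containing all locations, with endpoints $l,r$; $\mathrm{lrm}$ returns $l$ w.p. $1/4$, $r$ w.p. $1/4$, and the midpoint of that arc w.p. $1/2$. RC: the antipodal points $\hat{x}_1,\dots,\hat{x}_n$ partition $G$ into arcs between cyclically consecutive antipodal points; $\mathrm{rc}$ returns the midpoint of each such arc with probability equal to its length. *)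

theory Defs
  imports "HOL-Probability.Probability"
begin

text \<open>The circle G of circumference 1 is modelled as R/Z: a point is represented by any
real number, two reals denoting the same point iff they differ by an integer.
All notions below are invariant under integer shifts (they only use frac).\<close>

definition cdist :: "real \<Rightarrow> real \<Rightarrow> real" where
  "cdist x y = min (frac (x - y)) (frac (y - x))"

definition antipode :: "real \<Rightarrow> real" where
  "antipode x = frac (x + 1/2)"

definition in_arc :: "real \<Rightarrow> real \<Rightarrow> real \<Rightarrow> bool" where
  "in_arc l L y \<longleftrightarrow> frac (y - l) \<le> L"

definition on_semicircle :: "nat \<Rightarrow> (nat \<Rightarrow> real) \<Rightarrow> bool" where
  "on_semicircle n x \<longleftrightarrow> (\<exists>l. \<forall>j<n. in_arc l (1/2) (x j))"

definition is_min_arc :: "nat \<Rightarrow> (nat \<Rightarrow> real) \<Rightarrow> real \<Rightarrow> real \<Rightarrow> bool" where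
  "is_min_arc n x l L \<longleftrightarrow> 0 \<le> L \<and> (\<forall>j<n. in_arc l L (x j)) \<and>
     (\<forall>l' L'. 0 \<le> L' \<and> (\<forall>j<n. in_arc l' L' (x j)) \<longrightarrow> L \<le> L')"

text \<open>LRM for the chosen minimal arc with endpoints l and r = l+L.\<close>
definition lrm :: "real \<Rightarrow> real \<Rightarrow> real pmf" where
  "lrm l L = pmf_of_list [(frac l, 1/4), (frac (l + L), 1/4), (frac (l + L/2), 1/2)]"

text \<open>RC: sorted distinct antipodal points a_0 < ... < a_(k-1) in [0,1); arc j goes from a_j
to a_(j+1) (cyclically, the last one to a_0 + 1).\<close>
definition antipodes :: "nat \<Rightarrow> (nat \<Rightarrow> real) \<Rightarrow> real list" where
  "antipodes n x = sorted_list_of_set ((\<lambda>j. antipode (x j)) ` {..<n})"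

definition rc_arc_end :: "real list \<Rightarrow> nat \<Rightarrow> real" where
  "rc_arc_end a j = (if Suc j < length a then a ! Suc j else a ! 0 + 1)"

definition rc :: "nat \<Rightarrow> (nat \<Rightarrow> real) \<Rightarrow> real pmf" where
  "rc n x = (let a = antipodes n x in
     pmf_of_list (map (\<lambda>j. (frac ((a ! j + rc_arc_end a j) / 2), rc_arc_end a j - a ! j))
                      [0..<length a]))"

definition cost :: "real pmf \<Rightarrow> real \<Rightarrow> real" where
  "cost P y = measure_pmf.expectation P (\<lambda>z. cdist y z)"

end

theory Submission
  imports Defs
begin

(* Let y = x i, let t be its offset in the minimal arc [l, l + L] and
   v = L/2 + |t - L/2| its distance to the farther endpoint.  Then LRM costs v/2.
   For RC after the deviation, the expected distance from y is a midpoint-rule sum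
   (arc lengths times zdist at the midpoints) for the 1-periodic function zdist, whose
   integral over a full turn is 1/4.  Because the new profile is not on one semicircle,
   every RC arc is at most a half circle, and on such arcs the midpoint rule underestimates
   the integral only where the arc straddles the kink of zdist at y; at most one arc does,
   and its error is at most (1/2 - v)^2, since the antipode of the farther endpoint agent
   (still in place) sits at distance 1/2 - v from y. *)

definition zdist :: "real \<Rightarrow> real" where
  "zdist u = min (frac u) (frac (- u))"

lemma frac_eq_if_diff_int: "u = w + of_int c \<Longrightarrow> frac u = frac w"
  by simp

lemma cdist_zdist: "cdist y z = zdist (z - y)"
  by (simp add: cdist_def zdist_def min.commute)

lemma zdist_shift: "zdist (u + of_int c) = zdist u"
proof -
  have "- (u + of_int c) = - u + of_int (- c)" by simp
  then show ?thesis by (simp only: zdist_def frac_add_of_int_right)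
qed

lemma zdist_eq:
  assumes "of_int k - 1/2 \<le> u" "u \<le> of_int k + 1/2"
  shows "zdist u = \<bar>u - of_int k\<bar>"
proof (cases "u \<ge> of_int k")
  case True
  then have "frac u = u - of_int k" using assms by (simp add: frac_unique_iff)
  moreover have "u = of_int k \<or> frac (- u) = 1 - (u - of_int k)"
    using True assms by (auto simp: frac_unique_iff)
  ultimately show ?thesis using True assms by (auto simp: zdist_def)
next
  case False
  then have "frac u = u - of_int k + 1" "frac (- u) = of_int k - u"
    using assms by (simp_all add: frac_unique_iff)
  then show ?thesis using False assms by (simp add: zdist_def)
qed

(* A primitive of zdist: near the integer k it equals k/4 + (u-k)|u-k|/2.
  In particular each unit interval contributes the mean value 1/4 of zdist. *)
definition zprim :: "real \<Rightarrow> real" where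
  "zprim u = of_int \<lfloor>u + 1/2\<rfloor> / 4
     + (u - of_int \<lfloor>u + 1/2\<rfloor>) * \<bar>u - of_int \<lfloor>u + 1/2\<rfloor>\<bar> / 2"

lemma zprim_eq:
  assumes "of_int k - 1/2 \<le> u" "u \<le> of_int k + 1/2"
  shows "zprim u = of_int k / 4 + (u - of_int k) * \<bar>u - of_int k\<bar> / 2"
proof (cases "u = of_int k + 1/2")
  case True
  then have "\<lfloor>u + 1/2\<rfloor> = k + 1" by simp
  then show ?thesis using True by (simp add: zprim_def)
next
  case False
  then have "\<lfloor>u + 1/2\<rfloor> = k" using assms by (simp add: floor_eq_iff)
  then show ?thesis by (simp add: zprim_def)
qed

lemma zprim_add_1: "zprim (u + 1) = zprim u + 1/4"
proof -
  have "\<lfloor>u + 1 + 1/2\<rfloor> = \<lfloor>u + 1/2\<rfloor> + 1"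
    by (metis add.commute add.left_commute floor_add_int of_int_1)
  then show ?thesis by (simp add: zprim_def algebra_simps)
qed

(* Error term of the midpoint rule on [p, q] when this interval straddles the integer
  floor q, where the convex kink of zdist sits. *)
definition kink_pen :: "real \<Rightarrow> real \<Rightarrow> real" where
  "kink_pen p q = (if p < of_int \<lfloor>q\<rfloor>
     then (min (of_int \<lfloor>q\<rfloor> - p) (q - of_int \<lfloor>q\<rfloor>))\<^sup>2 else 0)"

(* Midpoint rule on an interval containing the integer k (where zdist is convex):
  it underestimates the integral by at most the square of the shorter side. *)
lemma midpoint_across_integer:
  assumes "p \<le> of_int k" "of_int k \<le> q" "q - p \<le> 1/2"
  shows "zprim q - zprim p - (min (of_int k - p) (q - of_int k))\<^sup>2
           \<le> (q - p) * zdist ((p + q) / 2)"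
proof -
  define a b where "a = of_int k - p" and "b = q - of_int k"
  have zp: "zprim p = of_int k / 4 - a\<^sup>2 / 2"
    using zprim_eq[of k p] assms by (simp add: a_def abs_of_nonpos power2_eq_square field_simps)
  have zq: "zprim q = of_int k / 4 + b\<^sup>2 / 2"
    using zprim_eq[of k q] assms by (simp add: b_def power2_eq_square)
  have mid: "(p + q) / 2 - of_int k = (b - a) / 2"
    by (simp add: a_def b_def field_simps)
  have zd: "zdist ((p + q) / 2) = \<bar>b - a\<bar> / 2"
    using zdist_eq[of k "(p + q) / 2"] assms unfolding mid by simp
  have "(a\<^sup>2 + b\<^sup>2) / 2 - (min a b)\<^sup>2 \<le> (a + b) * (\<bar>b - a\<bar> / 2)"
  proof (cases "a \<le> b")
    case True
    then show ?thesis by (simp add: min_def power2_eq_square algebra_simps)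
  next
    case False
    then show ?thesis by (simp add: min_def power2_eq_square algebra_simps)
  qed
  then have "zprim q - zprim p - (min a b)\<^sup>2 \<le> (a + b) * zdist ((p + q) / 2)"
    by (simp add: zp zq zd field_simps)
  then show ?thesis by (simp add: a_def b_def)
qed

(* Midpoint rule on an interval between two consecutive integers (zdist is linear
  or concave there): it never underestimates the integral. *)
lemma midpoint_within_unit:
  assumes "of_int k \<le> p" "p \<le> q" "q \<le> of_int k + 1" "q - p \<le> 1/2"
  shows "zprim q - zprim p \<le> (q - p) * zdist ((p + q) / 2)"
proof -
  consider "q \<le> of_int k + 1/2" | "of_int k + 1/2 \<le> p" | "p < of_int k + 1/2" "of_int k + 1/2 < q"
    by linarith
  then show ?thesis
  proof cases
    case 1
    have "zdist ((p + q) / 2) = (p + q) / 2 - of_int k"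
      using zdist_eq[of k "(p + q) / 2"] 1 assms by simp
    moreover have "zprim q - zprim p = (q - p) * ((p + q) / 2 - of_int k)"
      using zprim_eq[of k p] zprim_eq[of k q] 1 assms by (simp add: field_simps)
    ultimately show ?thesis by simp
  next
    case 2
    have "zdist ((p + q) / 2) = of_int k + 1 - (p + q) / 2"
      using zdist_eq[of "k + 1" "(p + q) / 2"] 2 assms by simp
    moreover have "zprim q - zprim p = (q - p) * (of_int k + 1 - (p + q) / 2)"
      using zprim_eq[of "k + 1" p] zprim_eq[of "k + 1" q] 2 assms by (simp add: field_simps)
    ultimately show ?thesis by simp
  next
    case 3
    have gap: "zprim q - zprim p = 1/4 - (of_int k + 1 - q)\<^sup>2 / 2 - (p - of_int k)\<^sup>2 / 2"
      using zprim_eq[of k p] zprim_eq[of "k + 1" q] 3 assms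
      by (simp add: power2_eq_square field_simps)
    show ?thesis
    proof (cases "(p + q) / 2 \<le> of_int k + 1/2")
      case True
      then have "zdist ((p + q) / 2) = (p + q) / 2 - of_int k"
        using zdist_eq[of k "(p + q) / 2"] assms by simp
      moreover have "(q - p) * ((p + q) / 2 - of_int k) - (zprim q - zprim p)
                       = (q - of_int k - 1/2)\<^sup>2"
        unfolding gap by (simp add: power2_eq_square field_simps)
      ultimately show ?thesis by (smt (verit) zero_le_power2)
    next
      case False
      then have "zdist ((p + q) / 2) = of_int k + 1 - (p + q) / 2"
        using zdist_eq[of "k + 1" "(p + q) / 2"] assms by simp
      moreover have "(q - p) * (of_int k + 1 - (p + q) / 2) - (zprim q - zprim p)
                       = (p - of_int k - 1/2)\<^sup>2"
        unfolding gap by (simp add: power2_eq_square field_simps)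
      ultimately show ?thesis by (smt (verit) zero_le_power2)
    qed
  qed
qed

lemma midpoint_rule_defect:
  assumes "p \<le> q" "q - p \<le> 1/2"
  shows "zprim q - zprim p - kink_pen p q \<le> (q - p) * zdist ((p + q) / 2)"
proof (cases "p < of_int \<lfloor>q\<rfloor>")
  case True
  then show ?thesis
    using midpoint_across_integer[of p "\<lfloor>q\<rfloor>" q] assms by (simp add: kink_pen_def)
next
  case False
  then show ?thesis
    using midpoint_within_unit[of "\<lfloor>q\<rfloor>" p q] assms
    by (simp add: kink_pen_def)
qed

lemma sum_list_group_by_fst:
  assumes "finite A" "fst ` set xs \<subseteq> A"
  shows "(\<Sum>u\<in>A. sum_list (map g (filter (\<lambda>z. fst z = u) xs))) = sum_list (map g xs)"
  using assms(2)
proof (induction xs)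
  case (Cons x xs)
  have "(\<Sum>u\<in>A. sum_list (map g (filter (\<lambda>z. fst z = u) (x # xs))))
      = (\<Sum>u\<in>A. (if fst x = u then g x else 0) + sum_list (map g (filter (\<lambda>z. fst z = u) xs)))"
    by (intro sum.cong) auto
  also have "\<dots> = (\<Sum>u\<in>A. (if fst x = u then g x else 0))
                  + (\<Sum>u\<in>A. sum_list (map g (filter (\<lambda>z. fst z = u) xs)))"
    by (simp add: sum.distrib)
  also have "(\<Sum>u\<in>A. (if fst x = u then g x else 0)) = g x"
    using Cons.prems assms(1) by (simp add: sum.delta)
  finally show ?case using Cons by simp
qed simp

lemma expectation_pmf_of_list:
  assumes "pmf_of_list_wf xs"
  shows "measure_pmf.expectation (pmf_of_list xs) f = sum_list (map (\<lambda>z. snd z * f (fst z)) xs)"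
proof -
  let ?A = "set (map fst xs)"
  have "measure_pmf.expectation (pmf_of_list xs) f = (\<Sum>u\<in>?A. f u * pmf (pmf_of_list xs) u)"
    by (rule integral_measure_pmf_real) (use set_pmf_of_list[OF assms] in auto)
  also have "\<dots> = (\<Sum>u\<in>?A. sum_list (map (\<lambda>z. snd z * f (fst z)) (filter (\<lambda>z. fst z = u) xs)))"
  proof (intro sum.cong refl)
    fix u
    let ?L = "filter (\<lambda>z. fst z = u) xs"
    have "(\<Sum>z\<leftarrow>?L. snd z * f (fst z)) = (\<Sum>z\<leftarrow>?L. f u * snd z)"
      by (intro arg_cong[where f = sum_list] map_cong) auto
    then show "f u * pmf (pmf_of_list xs) u = (\<Sum>z\<leftarrow>?L. snd z * f (fst z))"
      by (simp add: pmf_pmf_of_list[OF assms] sum_list_const_mult)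
  qed
  also have "\<dots> = sum_list (map (\<lambda>z. snd z * f (fst z)) xs)"
    by (rule sum_list_group_by_fst) auto
  finally show ?thesis .
qed

lemma sum_le_single_support:
  fixes f :: "'a \<Rightarrow> real"
  assumes "finite S" "\<And>j. j \<in> S \<Longrightarrow> f j \<le> B" "0 \<le> B"
    and single: "\<And>j j'. j \<in> S \<Longrightarrow> j' \<in> S \<Longrightarrow> f j \<noteq> 0 \<Longrightarrow> f j' \<noteq> 0 \<Longrightarrow> j = j'"
  shows "sum f S \<le> B"
proof (cases "\<exists>j\<in>S. f j \<noteq> 0")
  case True
  then obtain j0 where j0: "j0 \<in> S" "f j0 \<noteq> 0" by blast
  have "sum f S = f j0 + sum f (S - {j0})" using assms(1) j0(1) by (simp add: sum.remove)
  also have "sum f (S - {j0}) = 0" using single j0 by (intro sum.neutral) blast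
  finally show ?thesis using assms(2) j0 by simp
next
  case False
  then show ?thesis using assms(3) by simp
qed

lemma kink_pen_le_quarter_length:
  assumes "p \<le> q"
  shows "kink_pen p q \<le> ((q - p) / 2)\<^sup>2"
proof (cases "p < of_int \<lfloor>q\<rfloor>")
  case True
  define \<mu> where "\<mu> = min (of_int \<lfloor>q\<rfloor> - p) (q - of_int \<lfloor>q\<rfloor>)"
  have "0 \<le> \<mu>" "\<mu> \<le> (q - p) / 2" using True by (auto simp: \<mu>_def min_def)
  then show ?thesis using True by (simp add: kink_pen_def \<mu>_def[symmetric] power_mono)
next
  case False
  then show ?thesis by (simp add: kink_pen_def)
qed

lemma kink_pen_nonzero:
  assumes "kink_pen p q \<noteq> 0"
  shows "p < of_int \<lfloor>q\<rfloor> \<and> of_int \<lfloor>q\<rfloor> < q"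
proof -
  have "p < of_int \<lfloor>q\<rfloor>" "min (of_int \<lfloor>q\<rfloor> - p) (q - of_int \<lfloor>q\<rfloor>) \<noteq> 0"
    using assms by (auto simp: kink_pen_def split: if_splits)
  then show ?thesis by (smt (verit, best) of_int_floor_le)
qed

definition rc_list :: "real list \<Rightarrow> (real \<times> real) list" where
  "rc_list a = map (\<lambda>j. (frac ((a ! j + rc_arc_end a j) / 2), rc_arc_end a j - a ! j)) [0..<length a]"

lemma rc_eq: "rc n x = pmf_of_list (rc_list (antipodes n x))"
  by (simp add: rc_def rc_list_def Let_def)

(* A strictly increasing list of points of [0, 1): the representatives of the antipodal
  points in RC.  Consecutive points bound the RC arcs, the last arc wrapping around through 1. *)
locale unit_points =
  fixes a :: "real list"
  assumes sorted: "sorted_wrt (<) a"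
    and in_unit: "\<forall>z\<in>set a. 0 \<le> z \<and> z < 1"
begin

lemma nth_less: "i < j \<Longrightarrow> j < length a \<Longrightarrow> a ! i < a ! j"
  using sorted by (simp add: sorted_wrt_iff_nth_less)

lemma nth_le: "i \<le> j \<Longrightarrow> j < length a \<Longrightarrow> a ! i \<le> a ! j"
  using nth_less by (metis le_less)

lemma nth_in_unit: "j < length a \<Longrightarrow> 0 \<le> a ! j \<and> a ! j < 1"
  using in_unit by simp

lemma arc_bounds:
  assumes "j < length a"
  shows "a ! 0 \<le> a ! j" "a ! j \<le> rc_arc_end a j" "rc_arc_end a j \<le> a ! 0 + 1"
proof -
  have "0 < length a" using assms by linarith
  then have a0: "0 \<le> a ! 0" using nth_in_unit by blast
  show "a ! 0 \<le> a ! j" using nth_le[of 0 j] assms by simp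
  show "a ! j \<le> rc_arc_end a j"
    using assms a0 nth_less[of j "Suc j"] nth_in_unit[of j] by (auto simp: rc_arc_end_def)
  show "rc_arc_end a j \<le> a ! 0 + 1"
    using a0 nth_in_unit[of "Suc j"] by (auto simp: rc_arc_end_def)
qed

lemma arc_end_le_later:
  assumes "j < j'" "j' < length a"
  shows "rc_arc_end a j \<le> a ! j'"
  using assms nth_le[of "Suc j" j'] by (auto simp: rc_arc_end_def)

lemma arcs_telescope:
  fixes F :: "real \<Rightarrow> 'b::ab_group_add"
  assumes "a \<noteq> []"
  shows "(\<Sum>j<length a. F (rc_arc_end a j) - F (a ! j)) = F (a ! 0 + 1) - F (a ! 0)"
proof -
  define h where "h j = (if j < length a then a ! j else a ! 0 + 1)" for j
  have "(\<Sum>j<length a. F (rc_arc_end a j) - F (a ! j)) = (\<Sum>j<length a. F (h (Suc j)) - F (h j))"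
    by (intro sum.cong) (auto simp: h_def rc_arc_end_def)
  also have "\<dots> = F (a ! 0 + 1) - F (a ! 0)"
    using sum_lessThan_telescope[of "\<lambda>j. F (h j)" "length a"] assms by (simp add: h_def)
  finally show ?thesis .
qed

lemma no_point_inside_arc:
  assumes "j < length a" "z \<in> set a"
  shows "\<not> (a ! j < z + of_int c \<and> z + of_int c < rc_arc_end a j)"
proof
  assume inside: "a ! j < z + of_int c \<and> z + of_int c < rc_arc_end a j"
  obtain i where i: "i < length a" "z = a ! i" using assms(2) by (auto simp: in_set_conv_nth)
  consider "c = 0" | "c \<ge> 1" | "c \<le> -1" by linarith
  then show False
  proof cases
    case 1
    then have "j < i" using inside i nth_le[of i j] assms(1) by force
    then show False using inside i 1 arc_end_le_later[of j i] by simp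
  next
    case 2
    then show False using inside i arc_bounds[OF i(1)] arc_bounds[OF assms(1)] by linarith
  next
    case 3
    then show False using inside i nth_in_unit[OF i(1)] nth_in_unit[OF assms(1)] by linarith
  qed
qed

lemma in_complement_arc:
  assumes "j < length a" "z \<in> set a"
  shows "in_arc (rc_arc_end a j) (1 - (rc_arc_end a j - a ! j)) z"
proof (rule ccontr)
  define e where "e = rc_arc_end a j"
  define w where "w = e + frac (z - e) - 1"
  assume "\<not> in_arc e (1 - (e - a ! j)) z"
  then have "a ! j < w" by (simp add: in_arc_def w_def)
  moreover have "w < e" using frac_lt_1[of "z - e"] by (simp add: w_def)
  moreover have "w = z + of_int (- \<lfloor>z - e\<rfloor> - 1)" by (simp add: w_def frac_def)
  ultimately show False
    using no_point_inside_arc[OF assms, of "- \<lfloor>z - e\<rfloor> - 1"] by (simp add: e_def)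
qed

lemma kink_pen_le_point:
  assumes "j < length a" "z \<in> set a" "z = y + d + of_int c"
  shows "kink_pen (a ! j - y) (rc_arc_end a j - y) \<le> d\<^sup>2"
proof (cases "a ! j - y < of_int \<lfloor>rc_arc_end a j - y\<rfloor>")
  case True
  define K where "K = \<lfloor>rc_arc_end a j - y\<rfloor>"
  define \<mu> where "\<mu> = min (of_int K - (a ! j - y)) (rc_arc_end a j - y - of_int K)"
  have "of_int K \<le> rc_arc_end a j - y" "a ! j - y < of_int K"
    using True by (simp_all add: K_def)
  then have K: "a ! j < y + of_int K" "y + of_int K \<le> rc_arc_end a j"
    by linarith+
  have not_inside: "\<not> (a ! j < y + of_int K + d \<and> y + of_int K + d < rc_arc_end a j)"
    using no_point_inside_arc[OF assms(1,2), of "K - c"] assms(3) by (simp add: algebra_simps)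
  have "\<mu> \<le> \<bar>d\<bar>"
  proof (cases "0 \<le> d")
    case True
    then show ?thesis using not_inside K by (auto simp: \<mu>_def)
  next
    case False
    then show ?thesis using not_inside K by (auto simp: \<mu>_def)
  qed
  moreover have "0 \<le> \<mu>" using K by (simp add: \<mu>_def)
  ultimately have "\<mu>\<^sup>2 \<le> \<bar>d\<bar>\<^sup>2" by (rule power_mono)
  then show ?thesis using True by (simp add: kink_pen_def K_def[symmetric] \<mu>_def[symmetric])
next
  case False
  then show ?thesis by (simp add: kink_pen_def)
qed

(* The arcs tile the circle, so only one of them contains a translate of y in its
  interior; hence at most one arc has a nonzero penalty. *)
lemma at_most_one_kink:
  assumes "j < length a" "j' < length a"
    and "kink_pen (a ! j - y) (rc_arc_end a j - y) \<noteq> 0"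
    and "kink_pen (a ! j' - y) (rc_arc_end a j' - y) \<noteq> 0"
  shows "j = j'"
proof -
  have inside: "\<exists>c. a ! k < y + of_int c \<and> y + of_int c < rc_arc_end a k"
    if "kink_pen (a ! k - y) (rc_arc_end a k - y) \<noteq> 0" for k
    using kink_pen_nonzero[OF that] by (intro exI[of _ "\<lfloor>rc_arc_end a k - y\<rfloor>"]) auto
  have "\<not> (j < j')" if "j < length a" "j' < length a"
    "a ! j < y + of_int c" "y + of_int c < rc_arc_end a j"
    "a ! j' < y + of_int c'" "y + of_int c' < rc_arc_end a j'" for j j' c c'
  proof
    assume "j < j'"
    then have "c < c'" using that arc_end_le_later[of j j'] by force
    then show False using that arc_bounds[of j] arc_bounds[of j'] by linarith
  qed
  then show ?thesis using assms inside[of j] inside[of j'] by (metis linorder_neqE_nat)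
qed

lemma rc_list_wf:
  assumes "a \<noteq> []"
  shows "pmf_of_list_wf (rc_list a)"
proof (rule pmf_of_list_wfI)
  show "sum_list (map snd (rc_list a)) = 1"
    using arcs_telescope[OF assms, of id]
    by (simp add: rc_list_def o_def sum_list_sum_nth atLeast0LessThan)
qed (auto simp: rc_list_def arc_bounds)

lemma rc_list_expectation:
  assumes "a \<noteq> []"
  shows "measure_pmf.expectation (pmf_of_list (rc_list a)) (\<lambda>z. cdist y z)
       = (\<Sum>j<length a. (rc_arc_end a j - a ! j) * zdist ((a ! j + rc_arc_end a j) / 2 - y))"
proof -
  have "zdist (frac u - y) = zdist (u - y)" for u
    using zdist_shift[of "u - y" "- \<lfloor>u\<rfloor>"] by (simp add: frac_def algebra_simps)
  then show ?thesis
    unfolding expectation_pmf_of_list[OF rc_list_wf[OF assms]]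
    by (simp add: rc_list_def cdist_zdist o_def sum_list_sum_nth atLeast0LessThan)
qed

lemma rc_list_cost_lower_bound:
  assumes "a \<noteq> []" and short: "\<forall>j<length a. rc_arc_end a j - a ! j \<le> 1/2"
    and "0 \<le> B" and pen: "\<forall>j<length a. kink_pen (a ! j - y) (rc_arc_end a j - y) \<le> B"
  shows "1/4 - B \<le> measure_pmf.expectation (pmf_of_list (rc_list a)) (\<lambda>z. cdist y z)"
proof -
  let ?e = "rc_arc_end a"
  let ?pen = "\<lambda>j. kink_pen (a ! j - y) (?e j - y)"
  have total: "(\<Sum>j<length a. zprim (?e j - y) - zprim (a ! j - y)) = 1/4"
    using arcs_telescope[OF assms(1), of "\<lambda>u. zprim (u - y)"]
    by (simp add: diff_add_eq[symmetric] zprim_add_1)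
  have "zprim (?e j - y) - zprim (a ! j - y) - ?pen j
          \<le> (?e j - a ! j) * zdist ((a ! j + ?e j) / 2 - y)" if "j < length a" for j
    using midpoint_rule_defect[of "a ! j - y" "?e j - y"] arc_bounds[OF that] short that
    by (simp add: field_simps)
  then have "(\<Sum>j<length a. zprim (?e j - y) - zprim (a ! j - y) - ?pen j)
          \<le> (\<Sum>j<length a. (?e j - a ! j) * zdist ((a ! j + ?e j) / 2 - y))"
    by (intro sum_mono) simp
  then have "(\<Sum>j<length a. zprim (?e j - y) - zprim (a ! j - y)) - (\<Sum>j<length a. ?pen j)
          \<le> (\<Sum>j<length a. (?e j - a ! j) * zdist ((a ! j + ?e j) / 2 - y))"
    by (simp only: sum_subtractf)
  moreover have "(\<Sum>j<length a. ?pen j) \<le> B"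
    using pen assms(3) at_most_one_kink by (intro sum_le_single_support) auto
  ultimately show ?thesis using total by (simp add: rc_list_expectation[OF assms(1)])
qed

end

lemma set_antipodes: "set (antipodes n x) = (\<lambda>j. antipode (x j)) ` {..<n}"
  by (simp add: antipodes_def)

lemma antipodes_unit_points: "unit_points (antipodes n x)"
  by unfold_locales (auto simp: antipodes_def antipode_def frac_lt_1)

(* If the agents are not on one semicircle, every RC arc has length at most 1/2: a longer
  arc would leave all antipodes, hence all agents, within an arc shorter than 1/2. *)
lemma rc_arcs_short:
  assumes "\<not> on_semicircle n x" "j < length (antipodes n x)"
  shows "rc_arc_end (antipodes n x) j - antipodes n x ! j \<le> 1/2"
proof (rule ccontr)
  let ?a = "antipodes n x"
  define e where "e = rc_arc_end ?a j"
  assume long: "\<not> e - ?a ! j \<le> 1/2"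
  have "in_arc (e + 1/2) (1/2) (x k)" if "k < n" for k
  proof -
    have "antipode (x k) \<in> set ?a" using that by (simp add: set_antipodes)
    then have "frac (antipode (x k) - e) \<le> 1 - (e - ?a ! j)"
      using unit_points.in_complement_arc[OF antipodes_unit_points assms(2)]
      by (simp add: in_arc_def e_def)
    moreover have "frac (x k - (e + 1/2)) = frac (antipode (x k) - e)"
      by (rule frac_eq_if_diff_int[of _ _ "\<lfloor>x k + 1/2\<rfloor> - 1"]) (simp add: antipode_def frac_def)
    ultimately show ?thesis using long by (simp add: in_arc_def)
  qed
  then show False using assms(1) by (auto simp: on_semicircle_def)
qed

lemma cost_rc_lower_bound:
  assumes "\<not> on_semicircle n x" and "0 \<le> B"
    and pen: "\<forall>j<length (antipodes n x).
               kink_pen (antipodes n x ! j - y) (rc_arc_end (antipodes n x) j - y) \<le> B"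
  shows "1/4 - B \<le> cost (rc n x) y"
proof -
  interpret unit_points "antipodes n x" by (rule antipodes_unit_points)
  have "antipodes n x \<noteq> []"
    using assms(1) by (auto simp: on_semicircle_def set_antipodes simp flip: set_empty)
  then show ?thesis
    unfolding cost_def rc_eq
    using rc_list_cost_lower_bound assms(2) pen rc_arcs_short[OF assms(1)] by blast
qed

lemma min_arc_le_half:
  assumes "on_semicircle n x" "is_min_arc n x l L"
  shows "L \<le> 1/2"
proof -
  obtain l' where "\<forall>j<n. in_arc l' (1/2) (x j)" using assms(1) by (auto simp: on_semicircle_def)
  moreover have "0 \<le> (1/2 :: real)" by simp
  ultimately show ?thesis using assms(2) unfolding is_min_arc_def by blast
qed

(* Both endpoints of a minimal arc are occupied by agents (otherwise it could be shrunk). *)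
lemma min_arc_starts_at_agent:
  assumes "i < n" "is_min_arc n x l L"
  shows "\<exists>j<n. frac (x j - l) = 0"
proof -
  define S where "S = (\<lambda>j. frac (x j - l)) ` {..<n}"
  define \<delta> where "\<delta> = Min S"
  have "finite S" "S \<noteq> {}" using assms(1) by (auto simp: S_def)
  then have \<delta>S: "\<delta> \<in> S" and \<delta>_le: "\<And>j. j < n \<Longrightarrow> \<delta> \<le> frac (x j - l)"
    by (auto simp: \<delta>_def S_def)
  have \<delta>0: "0 \<le> \<delta>" using \<delta>S by (auto simp: S_def)
  have in_arc: "\<And>j. j < n \<Longrightarrow> frac (x j - l) \<le> L" using assms(2) by (simp add: is_min_arc_def in_arc_def)
  have "frac (x j - (l + \<delta>)) = frac (x j - l) - \<delta>" if "j < n" for j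
  proof -
    have "frac (x j - (l + \<delta>)) = frac (frac (x j - l) - \<delta>)"
      by (rule frac_eq_if_diff_int[of _ _ "\<lfloor>x j - l\<rfloor>"]) (simp add: frac_def)
    also have "\<dots> = frac (x j - l) - \<delta>"
      using \<delta>_le[OF that] \<delta>0 frac_lt_1[of "x j - l"] by (simp add: frac_eq)
    finally show ?thesis .
  qed
  then have "\<forall>j<n. in_arc (l + \<delta>) (L - \<delta>) (x j)" using in_arc by (simp add: in_arc_def)
  moreover have "0 \<le> L - \<delta>" using \<delta>_le[OF assms(1)] in_arc[OF assms(1)] by linarith
  ultimately have "L \<le> L - \<delta>" using assms(2) unfolding is_min_arc_def by blast
  then have "\<delta> = 0" using \<delta>0 by linarith
  then show ?thesis using \<delta>S by (auto simp: S_def)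
qed

lemma min_arc_ends_at_agent:
  assumes "i < n" "is_min_arc n x l L"
  shows "\<exists>j<n. frac (x j - l) = L"
proof -
  define S where "S = (\<lambda>j. frac (x j - l)) ` {..<n}"
  define M where "M = Max S"
  have "finite S" "S \<noteq> {}" using assms(1) by (auto simp: S_def)
  then have MS: "M \<in> S" and le_M: "\<forall>j<n. frac (x j - l) \<le> M"
    by (auto simp: M_def S_def)
  have "M \<le> L" using MS assms(2) by (auto simp: S_def is_min_arc_def in_arc_def)
  moreover have "L \<le> M"
    using assms(2) le_M MS unfolding is_min_arc_def in_arc_def by (auto simp: S_def)
  ultimately show ?thesis using MS by (auto simp: S_def)
qed

lemma cdist_from_arc_point:
  assumes "\<bar>s - frac (y - l)\<bar> \<le> 1/2"
  shows "cdist y (frac (l + s)) = \<bar>s - frac (y - l)\<bar>"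
proof -
  have "frac (l + s) - y = (s - frac (y - l)) + of_int (- \<lfloor>l + s\<rfloor> - \<lfloor>y - l\<rfloor>)"
    by (simp add: frac_def)
  then have "zdist (frac (l + s) - y) = zdist (s - frac (y - l))"
    by (simp only: zdist_shift)
  also have "\<dots> = \<bar>s - frac (y - l)\<bar>"
  proof -
    have "- (1/2) \<le> s - frac (y - l) \<and> s - frac (y - l) \<le> 1/2" using assms by arith
    then show ?thesis using zdist_eq[of 0 "s - frac (y - l)"] by simp
  qed
  finally show ?thesis by (simp add: cdist_zdist)
qed

lemma cost_lrm:
  assumes "0 \<le> L" "L \<le> 1/2" "frac (y - l) \<le> L"
  shows "cost (lrm l L) y = (L/2 + \<bar>frac (y - l) - L/2\<bar>) / 2"
proof -
  define t where "t = frac (y - l)"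
  have t: "0 \<le> t" "t \<le> L" using assms(3) by (simp_all add: t_def)
  have wf: "pmf_of_list_wf [(frac l, 1/4), (frac (l + L), 1/4), (frac (l + L/2), 1/2::real)]"
    by (rule pmf_of_list_wfI) auto
  have "cost (lrm l L) y = 1/4 * cdist y (frac (l + 0)) + 1/4 * cdist y (frac (l + L))
                          + 1/2 * cdist y (frac (l + L/2))"
    by (simp add: cost_def lrm_def expectation_pmf_of_list[OF wf])
  also have "\<bar>L/2 - t\<bar> \<le> 1/2" using t assms(2) by arith
  then have "1/4 * cdist y (frac (l + 0)) + 1/4 * cdist y (frac (l + L))
             + 1/2 * cdist y (frac (l + L/2)) = 1/4 * t + 1/4 * (L - t) + 1/2 * \<bar>L/2 - t\<bar>"
    using cdist_from_arc_point[of 0 y l] cdist_from_arc_point[of L y l]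
      cdist_from_arc_point[of "L/2" y l] t assms(2)
    by (simp add: t_def[symmetric] abs_le_iff)
  also have "\<dots> = (L/2 + \<bar>t - L/2\<bar>) / 2" by (simp add: abs_minus_commute field_simps)
  finally show ?thesis by (simp add: t_def)
qed

lemma antipode_offset:
  "\<exists>c. antipode u = y + (frac (u - l) - frac (y - l) + 1/2) + of_int c"
  by (rule exI[of _ "\<lfloor>u - l\<rfloor> - \<lfloor>y - l\<rfloor> - \<lfloor>u + 1/2\<rfloor>"])
    (simp add: antipode_def frac_def)

lemma antipode_of_unmoved_agent:
  assumes "k < n" "k \<noteq> i"
  shows "antipode (x k) \<in> set (antipodes n (x(i := xi')))"
  using assms by (force simp: set_antipodes)

lemma kink_pen_le_unmoved_agent:
  fixes x :: "nat \<Rightarrow> real" and i :: nat and xi' :: real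
  defines "x' \<equiv> x(i := xi')"
  assumes "k < n" "k \<noteq> i" "j < length (antipodes n x')"
  shows "kink_pen (antipodes n x' ! j - x i) (rc_arc_end (antipodes n x') j - x i)
           \<le> (frac (x k - l) - frac (x i - l) + 1/2 - of_int m)\<^sup>2"
proof -
  interpret unit_points "antipodes n x'" by (rule antipodes_unit_points)
  obtain c where "antipode (x k) = x i + (frac (x k - l) - frac (x i - l) + 1/2) + of_int c"
    using antipode_offset by blast
  then have "antipode (x k)
             = x i + (frac (x k - l) - frac (x i - l) + 1/2 - of_int m) + of_int (c + m)"
    by simp
  moreover have "antipode (x k) \<in> set (antipodes n x')"
    unfolding x'_def by (rule antipode_of_unmoved_agent[OF assms(2,3)])
  ultimately show ?thesis using kink_pen_le_point[OF assms(4)] by blast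
qed

(* After the deviation, each RC arc has penalty at most (1/2 - v)^2, v = L/2 + |t - L/2|:
  the endpoint agent farther from agent i stays in place, and its antipode, at offset 1/2 - v
  from x i, limits how far an arc around x i can reach on that side.  (If L = 0 then v = 0
  and the trivial bound 1/4 suffices.) *)
lemma rc_kink_pen_bound:
  fixes x :: "nat \<Rightarrow> real" and i :: nat and xi' :: real
  defines "x' \<equiv> x(i := xi')"
  assumes "i < n" "is_min_arc n x l L" "L \<le> 1/2" "j < length (antipodes n x')"
  shows "kink_pen (antipodes n x' ! j - x i) (rc_arc_end (antipodes n x') j - x i)
           \<le> (1/2 - (L/2 + \<bar>frac (x i - l) - L/2\<bar>))\<^sup>2"
    (is "?pen \<le> (1/2 - ?v)\<^sup>2")
proof -
  interpret unit_points "antipodes n x'" by (rule antipodes_unit_points)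
  define t where "t = frac (x i - l)"
  have t: "0 \<le> t" "t \<le> L" using assms(3,2) by (simp_all add: t_def is_min_arc_def in_arc_def)
  consider "L/2 \<le> t" "0 < t" | "t < L/2" | "t = 0" "L = 0" using t by linarith
  then show ?thesis
  proof cases
    case 1
    obtain k where k: "k < n" "frac (x k - l) = 0"
      using min_arc_starts_at_agent assms(2,3) by blast
    have "k \<noteq> i" using k(2) 1 by (auto simp: t_def)
    have "?pen \<le> (frac (x k - l) - t + 1/2 - of_int 0)\<^sup>2"
      using kink_pen_le_unmoved_agent[OF k(1) \<open>k \<noteq> i\<close> assms(5)[unfolded x'_def],
          where l = l and m = 0]
      by (simp add: x'_def t_def)
    then show ?thesis using 1 unfolding k(2) by (simp add: t_def[symmetric])
  next
    case 2
    obtain k where k: "k < n" "frac (x k - l) = L"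
      using min_arc_ends_at_agent assms(2,3) by blast
    have "k \<noteq> i"
    proof
      assume "k = i"
      then have "t = L" using k(2) by (simp add: t_def)
      then show False using 2 t by linarith
    qed
    have "?pen \<le> (frac (x k - l) - t + 1/2 - of_int 1)\<^sup>2"
      using kink_pen_le_unmoved_agent[OF k(1) \<open>k \<noteq> i\<close> assms(5)[unfolded x'_def],
          where l = l and m = 1]
      by (simp add: x'_def t_def)
    then show ?thesis using 2 unfolding k(2) by (simp add: t_def[symmetric] power2_commute)
  next
    case 3
    let ?a = "antipodes n x'"
    have "?pen \<le> ((rc_arc_end ?a j - ?a ! j) / 2)\<^sup>2"
      using kink_pen_le_quarter_length[of "?a ! j - x i" "rc_arc_end ?a j - x i"]
        arc_bounds[OF assms(5)] by simp
    also have "\<dots> \<le> (1/2)\<^sup>2"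
      using arc_bounds[OF assms(5)] by (intro power_mono) auto
    finally show ?thesis using 3 by (simp add: t_def[symmetric])
  qed
qed

theorem mainTheorem16:
  fixes n :: nat and x :: "nat \<Rightarrow> real" and i :: nat and xi' l L :: real
  assumes "i < n"
    and "on_semicircle n x"
    and "\<not> on_semicircle n (x(i := xi'))"
    and "is_min_arc n x l L"
  shows "cost (lrm l L) (x i) \<le> cost (rc n (x(i := xi'))) (x i)"
proof -
  define v where "v = L/2 + \<bar>frac (x i - l) - L/2\<bar>"
  have L: "0 \<le> L" "L \<le> 1/2" "frac (x i - l) \<le> L"
    using assms(1,4) min_arc_le_half[OF assms(2,4)] by (simp_all add: is_min_arc_def in_arc_def)
  then have v: "0 \<le> v" "v \<le> 1/2"
    using frac_ge_0[of "x i - l"] unfolding v_def by arith+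
  have "cost (lrm l L) (x i) = v/2"
    using cost_lrm[OF L] by (simp add: v_def)
  also have "v/2 \<le> 1/4 - (1/2 - v)\<^sup>2"
  proof -
    have "v * v \<le> v * (1/2)" using v by (intro mult_left_mono) auto
    then show ?thesis by (simp add: power2_eq_square algebra_simps)
  qed
  also have "1/4 - (1/2 - v)\<^sup>2 \<le> cost (rc n (x(i := xi'))) (x i)"
    using cost_rc_lower_bound[OF assms(3)] rc_kink_pen_bound[OF assms(1,4) L(2)]
    by (simp add: v_def)
  finally show ?thesis .
qed

end
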